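(* Consider DIVIDING. For all $n\in \mathbb{N}$, $\mathcal{SG}(n)=\Omega_2(n)$.
   Context: DIVIDING is the impartial normal-play game on positive integers (heaps) where a move replaces a heap $n$ by $m\ge 2$ equal heaps $k$ with $km=n$, the resulting heaps being played as a disjunctive sum; a heap of size $1$ is terminal. $\mathcal{SG}$ denotes the Sprague-Grundy value (mex rule; nim-sum for disjunctive sums). $\Omega_2(n)$ is the number of prime factors of $n$ where the odd primes are counted with multiplicity and the prime $2$ is counted without multiplicity (i.e. at most once). *)

theory Defs
  imports "HOL-Computational_Algebra.Primes"
begin

definition mex :: "nat set \<Rightarrow> nat" where
  "mex S = (LEAST x. x \<notin> S)"

definition nim_sum :: "nat list \<Rightarrow> nat" where
  "nim_sum xs = foldr xor xs 0"

text \<open>A move replaces n by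
  m \<ge> 2 equal heaps of size k with k * m = n; equivalently k is a divisor of n
  with k < n and m = n div k.  The resulting position is the disjunctive sum of
  m copies of heap k, whose SG value is the nim-sum of m copies of SG(k).
  Heap 1 (no moves) gets mex {} = 0.  (Heap 0 is not a position; value 0 by convention.)\<close>
function SG :: "nat \<Rightarrow> nat" where
  "SG n = (if n \<le> 1 then 0 else
     mex ((\<lambda>k. nim_sum (replicate (n div k) (SG k))) ` {k. k dvd n \<and> k < n}))"
  by pat_completeness auto
termination
  by (relation "measure id") auto

definition Omega2 :: "nat \<Rightarrow> nat" where
  "Omega2 n = size (filter_mset (\<lambda>p. p \<noteq> 2) (prime_factorization n))
              + (if 2 dvd n then 1 else 0)"

end

theory Submission
  imports Defs
begin

(* Splitting heap n into m copies of k = n div m is worth SG k for odd m and 0 for even m.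
   By induction the option values of n are therefore Omega2 k when the cofactor m > 1 is odd
   and 0 when it is even.  An odd cofactor removes at least one odd prime factor, so Omega2 n
   (which is positive) is never an option value; conversely, dividing off any nonempty
   sub-multiset of the odd prime factors, or halving an even n, realises every smaller value. *)

lemma nim_sum_replicate: "nim_sum (replicate m v) = (if odd m then v else 0)"
  by (induction m) (auto simp: nim_sum_def)

lemma mex_eqI:
  assumes "x \<notin> S" and "\<And>y. y < x \<Longrightarrow> y \<in> S"
  shows "mex S = x"
  unfolding mex_def by (rule Least_equality) (use assms not_less in auto)

lemma exists_subset_mset_size:
  assumes "s \<le> size M"
  obtains N where "N \<subseteq># M" and "size N = s"
proof -
  obtain xs where xs: "mset xs = M" using ex_mset by blast
  have "M = mset (take s xs) + mset (drop s xs)"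
    by (simp flip: xs mset_append)
  then have "mset (take s xs) \<subseteq># M" by (metis mset_subset_eq_add_left)
  moreover have "size (mset (take s xs)) = s" using assms xs by auto
  ultimately show ?thesis by (rule that)
qed

lemma exists_odd_divisor_prime_factor_count:
  fixes n :: nat
  assumes "n > 0" and "j \<le> size {#p \<in># prime_factorization n. p \<noteq> 2#}"
  obtains d where "d dvd n" and "odd d" and "size (prime_factorization d) = j"
proof -
  obtain R where R: "R \<subseteq># {#p \<in># prime_factorization n. p \<noteq> 2#}" "size R = j"
    using exists_subset_mset_size assms(2) by blast
  then have R_pf: "R \<subseteq># prime_factorization n"
    by (meson multiset_filter_subset subset_mset.order_trans)
  have pf_R: "prime_factorization (prod_mset R) = R"
    using R_pf by (intro prime_factorization_prod_mset_primes) (auto dest: mset_subset_eqD)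
  have dvd: "prod_mset R dvd n"
    using prod_mset_subset_imp_dvd[OF R_pf] assms(1) by simp
  moreover have "odd (prod_mset R)"
  proof
    assume "even (prod_mset R)"
    moreover have "prod_mset R \<noteq> 0" using dvd assms(1) by (metis dvd_0_left_iff less_not_refl)
    ultimately have "2 \<in># R"
      by (metis pf_R in_prime_factors_iff two_is_prime_nat)
    then show False using R(1) by (auto dest: mset_subset_eqD)
  qed
  moreover have "size (prime_factorization (prod_mset R)) = j" using pf_R R(2) by simp
  ultimately show ?thesis by (rule that)
qed

lemma Omega2_mult_odd:
  fixes k q :: nat
  assumes "k > 0" and "odd q"
  shows "Omega2 (k * q) = Omega2 k + size (prime_factorization q)"
proof -
  have "q > 0" using assms(2) by (rule odd_pos)
  then have pf: "prime_factorization (k * q) = prime_factorization k + prime_factorization q"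
    using assms(1) by (simp add: prime_factorization_mult)
  have "p \<noteq> 2" if "p \<in># prime_factorization q" for p
    using that assms(2) in_prime_factors_imp_dvd by fastforce
  then have odd_part: "{#p \<in># prime_factorization q. p \<noteq> 2#} = prime_factorization q"
    by (simp add: filter_mset_eq_conv)
  have "2 dvd k * q \<longleftrightarrow> 2 dvd k" using assms(2) by auto
  then show ?thesis unfolding Omega2_def pf filter_union_mset size_union odd_part by simp
qed

lemma Omega2_pos:
  assumes "n > 1"
  shows "Omega2 n > 0"
proof (cases "even n")
  case False
  obtain p where p: "prime p" "p dvd n" using assms prime_factor_nat[of n] by auto
  with False have "p \<in># {#p \<in># prime_factorization n. p \<noteq> 2#}"
    using assms by (auto simp: in_prime_factors_iff)
  then show ?thesis unfolding Omega2_def by (metis nonempty_has_size empty_iff set_mset_empty add_gr_0)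
qed (simp add: Omega2_def)

(* The value of the move from n to n div k copies of k, provided SG = Omega2 below n. *)
definition Omega2_option :: "nat \<Rightarrow> nat \<Rightarrow> nat" where
  "Omega2_option n k = (if odd (n div k) then Omega2 k else 0)"

lemma Omega2_option_neq:
  fixes n k :: nat
  assumes "n > 1" and "k dvd n" and "k < n"
  shows "Omega2_option n k \<noteq> Omega2 n"
proof (cases "odd (n div k)")
  case True
  obtain q where n: "n = k * q" using assms(2) by blast
  with assms have "k > 0" and "q > 1" by (auto intro: gr0I)
  then have "prime_factorization q \<noteq> {#}" by (simp add: prime_factorization_empty_iff)
  moreover have "Omega2 n = Omega2 k + size (prime_factorization q)"
    using Omega2_mult_odd \<open>k > 0\<close> True n by simp
  ultimately show ?thesis using True by (simp add: Omega2_option_def)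
next
  case False
  then show ?thesis using Omega2_pos[OF assms(1)] by (simp add: Omega2_option_def)
qed

lemma Omega2_option_below:
  fixes n j :: nat
  assumes "n > 1" and "j < Omega2 n"
  obtains k where "k dvd n" and "k < n" and "Omega2_option n k = j"
proof (cases "even n \<and> j = 0")
  case True
  then show ?thesis using assms(1) by (intro that[of "n div 2"]) (auto simp: Omega2_option_def)
next
  case False
  then have "Omega2 n - j \<le> size {#p \<in># prime_factorization n. p \<noteq> 2#}"
    by (auto simp: Omega2_def)
  moreover have "n > 0" using assms(1) by simp
  ultimately obtain d where d: "d dvd n" "odd d" "size (prime_factorization d) = Omega2 n - j"
    using exists_odd_divisor_prime_factor_count by blast
  define k where "k = n div d"
  have n: "n = k * d" using d(1) unfolding k_def by simp
  then have "k > 0" using assms(1) by (auto intro: gr0I)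
  have "d \<noteq> 1" using d(3) assms(2) by auto
  with odd_pos[OF d(2)] have "d > 1" by simp
  show ?thesis
  proof (rule that)
    show "k dvd n" using n by simp
    show "k < n" using n \<open>k > 0\<close> \<open>d > 1\<close> by simp
    have "Omega2 n = Omega2 k + (Omega2 n - j)"
      using Omega2_mult_odd[OF \<open>k > 0\<close> d(2)] d(3) n by simp
    moreover have "n div k = d" using n \<open>k > 0\<close> by simp
    ultimately show "Omega2_option n k = j" using assms(2) d(2) by (simp add: Omega2_option_def)
  qed
qed

lemma mex_Omega2_option_eq:
  fixes n :: nat
  assumes "n > 1"
  shows "mex (Omega2_option n ` {k. k dvd n \<and> k < n}) = Omega2 n"
proof (rule mex_eqI)
  show "Omega2 n \<notin> Omega2_option n ` {k. k dvd n \<and> k < n}"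
    using Omega2_option_neq[OF assms] by fastforce
next
  fix j assume "j < Omega2 n"
  with assms obtain k where "k dvd n" "k < n" "Omega2_option n k = j"
    by (rule Omega2_option_below)
  then show "j \<in> Omega2_option n ` {k. k dvd n \<and> k < n}" by blast
qed

theorem mainTheorem9:
  fixes n :: nat
  assumes "n \<ge> 1"
  shows "SG n = Omega2 n"
  using assms
proof (induction n rule: less_induct)
  case (less n)
  show ?case
  proof (cases "n = 1")
    case True
    then show ?thesis by (simp add: Omega2_def)
  next
    case False
    with less.prems have "n > 1" by simp
    have options: "nim_sum (replicate (n div k) (SG k)) = Omega2_option n k"
      if "k \<in> {k. k dvd n \<and> k < n}" for k
    proof -
      from that \<open>n > 1\<close> have "k \<ge> 1" by (auto intro: gr0I)
      with that less.IH show ?thesis by (simp add: Omega2_option_def nim_sum_replicate del: SG.simps)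
    qed
    have "SG n = mex ((\<lambda>k. nim_sum (replicate (n div k) (SG k))) ` {k. k dvd n \<and> k < n})"
      using \<open>n > 1\<close> by (subst SG.simps) (simp del: SG.simps)
    also have "\<dots> = mex (Omega2_option n ` {k. k dvd n \<and> k < n})"
      using image_cong[OF refl options] by (rule arg_cong)
    also have "\<dots> = Omega2 n"
      using \<open>n > 1\<close> by (rule mex_Omega2_option_eq)
    finally show ?thesis .
  qed
qed

end
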